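(* In the pool-based active learning setting, the utility function $f(S,\phi)=1-p_H(\mathcal{H}(\phi|_S))$ is worst-case submodular with respect to the induced prior $p(\phi)$; that is, for all partial realizations $\psi\subseteq\psi'$ (with positive probability) and every $e\in E\setminus\mathrm{dom}(\psi')$, $f_{wc}(e\mid\psi)\ge f_{wc}(e\mid\psi')$.
   Context: Pool-based active learning setting: $E$ is a finite set of data points and $O$ a finite set of labels. $\mathcal{H}$ is a finite set of hypotheses, each $h\in\mathcal{H}$ a function $h:E\to O$, with a prior probability distribution $p_H$ on $\mathcal{H}$; $p_H(\mathcal{H}')=\sum_{h\in\mathcal{H}'}p_H(h)$. Realizations are functions $\phi:E\to O$ with prior $p(\phi)=p_H(\{h\in\mathcal{H}:h=\phi\})$; $\Phi\sim p$. A partial realization is $\psi:S\to O$ with $\mathrm{dom}(\psi)=S\subseteq E$, identified with its set of pairs; $\psi\subseteq\psi'$ means $\psi'$ extends $\psi$; $\phi\sim\psi$ (or $h\sim\psi$) means agreement on $\mathrm{dom}(\psi)$; only $\psi$ with $\Pr[\Phi\sim\psi]>0$ are considered, and $p(\phi\mid\psi)=\Pr[\Phi=\phi\mid\Phi\sim\psi]$. The version space is $\mathcal{H}(\psi)=\{h\in\mathcal{H}:h\sim\psi\}$, and $\phi|_S$ denotes the restriction of $\phi$ to $S$. For $S\subseteq E$ and partial realization $\psi$, $f(S,\psi)=\mathbb{E}[f(S,\Phi)\mid\Phi\sim\psi]$. For $e\notin\mathrm{dom}(\psi)$, $O(e,\psi)=\{o\in O:\exists\phi,\ p(\phi\mid\psi)>0,\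 \phi(e)=o\}$ and $f_{wc}(e\mid\psi)=\min_{o\in O(e,\psi)}\{f(\mathrm{dom}(\psi)\cup\{e\},\psi\cup\{(e,o)\})-f(\mathrm{dom}(\psi),\psi)\}$. $f$ is worst-case submodular if $f_{wc}(e\mid\psi)\ge f_{wc}(e\mid\psi')$ for all $\psi\subseteq\psi'$ and all $e\in E\setminus\mathrm{dom}(\psi')$. *)

theory Defs
  imports "HOL-Analysis.Analysis"
begin

(* Data points: the finite type 'e (E = UNIV); labels: the finite type 'o (O = UNIV).
   Partial realizations: maps 'e \<rightharpoonup> 'o (dom psi = S). *)

definition prior_on :: "('e \<Rightarrow> 'o) set \<Rightarrow> (('e \<Rightarrow> 'o) \<Rightarrow> real) \<Rightarrow> bool" where
  "prior_on H pH \<longleftrightarrow> finite H \<and> (\<forall>h\<in>H. pH h \<ge> 0) \<and> (\<Sum>h\<in>H. pH h) = 1"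

definition pH_set :: "('e \<Rightarrow> 'o) set \<Rightarrow> (('e \<Rightarrow> 'o) \<Rightarrow> real) \<Rightarrow> ('e \<Rightarrow> 'o) set \<Rightarrow> real" where
  "pH_set H pH H' = (\<Sum>h\<in>H \<inter> H'. pH h)"

definition real_prior :: "('e \<Rightarrow> 'o) set \<Rightarrow> (('e \<Rightarrow> 'o) \<Rightarrow> real) \<Rightarrow> ('e \<Rightarrow> 'o) \<Rightarrow> real" where
  "real_prior H pH phi = pH_set H pH {h. h = phi}"

definition consistent :: "('e \<Rightarrow> 'o) \<Rightarrow> ('e \<rightharpoonup> 'o) \<Rightarrow> bool" where
  "consistent phi psi \<longleftrightarrow> (\<forall>e\<in>dom psi. psi e = Some (phi e))"

definition version_space :: "('e \<Rightarrow> 'o) set \<Rightarrow> ('e \<rightharpoonup> 'o) \<Rightarrow> ('e \<Rightarrow> 'o) set" where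
  "version_space H psi = {h\<in>H. consistent h psi}"

definition restrict_real :: "('e \<Rightarrow> 'o) \<Rightarrow> 'e set \<Rightarrow> ('e \<rightharpoonup> 'o)" where
  "restrict_real phi S = (\<lambda>e. if e \<in> S then Some (phi e) else None)"

definition prob_cons :: "('e::finite \<Rightarrow> 'o::finite) set \<Rightarrow> (('e \<Rightarrow> 'o) \<Rightarrow> real) \<Rightarrow> ('e \<rightharpoonup> 'o) \<Rightarrow> real" where
  "prob_cons H pH psi = (\<Sum>phi\<in>UNIV. if consistent phi psi then real_prior H pH phi else 0)"

definition cond_prior :: "('e::finite \<Rightarrow> 'o::finite) set \<Rightarrow> (('e \<Rightarrow> 'o) \<Rightarrow> real) \<Rightarrow> ('e \<Rightarrow> 'o) \<Rightarrow> ('e \<rightharpoonup> 'o) \<Rightarrow> real" where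
  "cond_prior H pH phi psi =
     (if consistent phi psi then real_prior H pH phi / prob_cons H pH psi else 0)"

definition cond_util :: "('e::finite \<Rightarrow> 'o::finite) set \<Rightarrow> (('e \<Rightarrow> 'o) \<Rightarrow> real)
    \<Rightarrow> ('e set \<Rightarrow> ('e \<Rightarrow> 'o) \<Rightarrow> real) \<Rightarrow> 'e set \<Rightarrow> ('e \<rightharpoonup> 'o) \<Rightarrow> real" where
  "cond_util H pH f S psi = (\<Sum>phi\<in>UNIV. cond_prior H pH phi psi * f S phi)"

definition outcomes :: "('e::finite \<Rightarrow> 'o::finite) set \<Rightarrow> (('e \<Rightarrow> 'o) \<Rightarrow> real) \<Rightarrow> 'e \<Rightarrow> ('e \<rightharpoonup> 'o) \<Rightarrow> 'o set" where
  "outcomes H pH e psi = {ob. \<exists>phi. cond_prior H pH phi psi > 0 \<and> phi e = ob}"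

definition f_wc :: "('e::finite \<Rightarrow> 'o::finite) set \<Rightarrow> (('e \<Rightarrow> 'o) \<Rightarrow> real)
    \<Rightarrow> ('e set \<Rightarrow> ('e \<Rightarrow> 'o) \<Rightarrow> real) \<Rightarrow> 'e \<Rightarrow> ('e \<rightharpoonup> 'o) \<Rightarrow> real" where
  "f_wc H pH f e psi =
     Min ((\<lambda>ob. cond_util H pH f (dom psi \<union> {e}) (psi(e \<mapsto> ob)) - cond_util H pH f (dom psi) psi)
          ` outcomes H pH e psi)"

definition wc_submodular :: "('e::finite \<Rightarrow> 'o::finite) set \<Rightarrow> (('e \<Rightarrow> 'o) \<Rightarrow> real)
    \<Rightarrow> ('e set \<Rightarrow> ('e \<Rightarrow> 'o) \<Rightarrow> real) \<Rightarrow> bool" where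
  "wc_submodular H pH f \<longleftrightarrow>
     (\<forall>psi psi' e. psi \<subseteq>\<^sub>m psi' \<longrightarrow> prob_cons H pH psi > 0 \<longrightarrow> prob_cons H pH psi' > 0
        \<longrightarrow> e \<notin> dom psi' \<longrightarrow> f_wc H pH f e psi \<ge> f_wc H pH f e psi')"

definition version_util :: "('e \<Rightarrow> 'o) set \<Rightarrow> (('e \<Rightarrow> 'o) \<Rightarrow> real) \<Rightarrow> 'e set \<Rightarrow> ('e \<Rightarrow> 'o) \<Rightarrow> real" where
  "version_util H pH S phi = 1 - pH_set H pH (version_space H (restrict_real phi S))"

end

theory Submission
  imports Defs
begin

text \<open>
  Conditioned on \<open>\<psi>\<close>, the utility \<open>1 - p\<^sub>H(\<H>(\<psi>))\<close> is constant, so the gain of observing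
  label \<open>o\<close> at \<open>e\<close> is the prior mass of the hypotheses of \<open>\<H>(\<psi>)\<close> that this observation prunes
  (those with \<open>h e \<noteq> o\<close>). This pruned mass can only shrink when \<open>\<psi>\<close> is extended.
  The worst case over the outcomes possible after \<open>\<psi>'\<close> is bounded by the pruned mass of
  every label, including labels that have become impossible: for those, everything is pruned.
  Comparing with the label attaining the worst case after \<open>\<psi>\<close> gives the claim.
\<close>

definition pruned_mass ::
    "('e \<Rightarrow> 'o) set \<Rightarrow> (('e \<Rightarrow> 'o) \<Rightarrow> real) \<Rightarrow> ('e \<rightharpoonup> 'o) \<Rightarrow> 'e \<Rightarrow> 'o \<Rightarrow> real" where
  "pruned_mass H pH psi e ob = pH_set H pH (version_space H psi - {h. h e = ob})"

lemma real_prior_eq: "real_prior H pH phi = (if phi \<in> H then pH phi else 0)"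
proof -
  have "H \<inter> {h. h = phi} = (if phi \<in> H then {phi} else {})" by auto
  then show ?thesis by (simp add: real_prior_def pH_set_def)
qed

lemma prob_cons_eq_pH_set_version_space:
  fixes H :: "('e::finite \<Rightarrow> 'o::finite) set"
  shows "prob_cons H pH psi = pH_set H pH (version_space H psi)"
proof -
  have "prob_cons H pH psi = (\<Sum>phi\<in>UNIV. if phi \<in> version_space H psi then pH phi else 0)"
    unfolding prob_cons_def version_space_def by (rule sum.cong) (auto simp: real_prior_eq)
  also have "\<dots> = pH_set H pH (version_space H psi)"
    unfolding pH_set_def version_space_def by (subst sum.If_cases) (auto intro: sum.cong)
  finally show ?thesis .
qed

lemma pH_set_mono:
  assumes "prior_on H pH" "A \<subseteq> B"
  shows "pH_set H pH A \<le> pH_set H pH B"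
  using assms unfolding prior_on_def pH_set_def by (intro sum_mono2) auto

lemma pH_set_nonneg: "prior_on H pH \<Longrightarrow> pH_set H pH A \<ge> 0"
  unfolding prior_on_def pH_set_def by (auto intro: sum_nonneg)

lemma pH_set_pos_iff:
  assumes "prior_on H pH"
  shows "pH_set H pH A > 0 \<longleftrightarrow> (\<exists>h\<in>H \<inter> A. pH h > 0)"
proof
  assume "pH_set H pH A > 0"
  then show "\<exists>h\<in>H \<inter> A. pH h > 0"
    unfolding pH_set_def by (metis less_irrefl sum_nonpos not_le)
next
  assume "\<exists>h\<in>H \<inter> A. pH h > 0"
  then obtain h where "h \<in> H \<inter> A" "pH h > 0" by blast
  then show "pH_set H pH A > 0"
    using assms unfolding prior_on_def pH_set_def by (intro sum_pos2[of _ h]) auto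
qed

lemma version_space_antimono: "psi \<subseteq>\<^sub>m psi' \<Longrightarrow> version_space H psi' \<subseteq> version_space H psi"
  unfolding version_space_def consistent_def map_le_def by force

lemma version_space_map_upd:
  "e \<notin> dom psi \<Longrightarrow> version_space H (psi(e \<mapsto> ob)) = version_space H psi \<inter> {h. h e = ob}"
  unfolding version_space_def consistent_def by auto

lemma restrict_real_dom: "consistent phi psi \<Longrightarrow> restrict_real phi (dom psi) = psi"
  unfolding restrict_real_def consistent_def by (rule ext) (auto simp: dom_def)

lemma cond_util_version_util:
  fixes H :: "('e::finite \<Rightarrow> 'o::finite) set"
  assumes pos: "prob_cons H pH psi > 0"
  shows "cond_util H pH (version_util H pH) (dom psi) psi = 1 - pH_set H pH (version_space H psi)"
proof -
  let ?c = "1 - pH_set H pH (version_space H psi)"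
  have "cond_util H pH (version_util H pH) (dom psi) psi = (\<Sum>phi\<in>UNIV. cond_prior H pH phi psi) * ?c"
    unfolding cond_util_def sum_distrib_right
    by (rule sum.cong) (auto simp: cond_prior_def version_util_def restrict_real_dom)
  also have "(\<Sum>phi\<in>UNIV. cond_prior H pH phi psi)
      = (\<Sum>phi\<in>UNIV. if consistent phi psi then real_prior H pH phi else 0) / prob_cons H pH psi"
    unfolding cond_prior_def sum_divide_distrib by (rule sum.cong) auto
  also have "\<dots> = 1" using pos by (simp flip: prob_cons_def)
  finally show ?thesis by simp
qed

lemma cond_prior_pos_iff:
  fixes H :: "('e::finite \<Rightarrow> 'o::finite) set"
  assumes "prob_cons H pH psi > 0"
  shows "cond_prior H pH phi psi > 0 \<longleftrightarrow> phi \<in> version_space H psi \<and> pH phi > 0"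
  using assms by (auto simp: cond_prior_def real_prior_eq version_space_def zero_less_divide_iff)

lemma outcomes_eq:
  fixes H :: "('e::finite \<Rightarrow> 'o::finite) set"
  assumes "prob_cons H pH psi > 0"
  shows "outcomes H pH e psi = (\<lambda>h. h e) ` {h \<in> version_space H psi. pH h > 0}"
  unfolding outcomes_def using cond_prior_pos_iff[OF assms] by blast

lemma mem_outcomes_iff:
  fixes H :: "('e::finite \<Rightarrow> 'o::finite) set"
  assumes "prior_on H pH" "prob_cons H pH psi > 0"
  shows "ob \<in> outcomes H pH e psi \<longleftrightarrow> pH_set H pH (version_space H psi \<inter> {h. h e = ob}) > 0"
  using pH_set_pos_iff[OF assms(1)] outcomes_eq[OF assms(2)]
  by (auto simp: version_space_def)

lemma outcomes_nonempty:
  fixes H :: "('e::finite \<Rightarrow> 'o::finite) set"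
  assumes "prior_on H pH" "prob_cons H pH psi > 0"
  shows "outcomes H pH e psi \<noteq> {}"
  using assms pH_set_pos_iff[OF assms(1)]
  by (auto simp: outcomes_eq prob_cons_eq_pH_set_version_space version_space_def)

lemma pH_set_version_space_split:
  assumes "prior_on H pH"
  shows "pH_set H pH (version_space H psi)
    = pH_set H pH (version_space H psi \<inter> {h. h e = ob}) + pruned_mass H pH psi e ob"
proof -
  have "finite (H \<inter> version_space H psi)"
    using assms by (simp add: prior_on_def)
  then have "sum pH (H \<inter> version_space H psi)
      = sum pH (H \<inter> version_space H psi \<inter> {h. h e = ob}) + sum pH (H \<inter> version_space H psi - {h. h e = ob})"
    by (rule sum.Int_Diff)
  then show ?thesis
    unfolding pruned_mass_def pH_set_def by (simp add: Int_assoc Int_Diff)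
qed

lemma pruned_mass_antimono:
  assumes "prior_on H pH" "psi \<subseteq>\<^sub>m psi'"
  shows "pruned_mass H pH psi' e ob \<le> pruned_mass H pH psi e ob"
  unfolding pruned_mass_def
  using assms by (intro pH_set_mono) (auto dest: version_space_antimono)

lemma f_wc_version_util:
  fixes H :: "('e::finite \<Rightarrow> 'o::finite) set"
  assumes pr: "prior_on H pH" and pos: "prob_cons H pH psi > 0" and e: "e \<notin> dom psi"
  shows "f_wc H pH (version_util H pH) e psi = Min (pruned_mass H pH psi e ` outcomes H pH e psi)"
proof -
  have gain: "cond_util H pH (version_util H pH) (dom psi \<union> {e}) (psi(e \<mapsto> ob))
      - cond_util H pH (version_util H pH) (dom psi) psi = pruned_mass H pH psi e ob"
    if ob: "ob \<in> outcomes H pH e psi" for ob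
  proof -
    have "prob_cons H pH (psi(e \<mapsto> ob)) > 0"
      using ob mem_outcomes_iff[OF pr pos]
      by (simp add: prob_cons_eq_pH_set_version_space version_space_map_upd[OF e])
    then have "cond_util H pH (version_util H pH) (dom psi \<union> {e}) (psi(e \<mapsto> ob))
        = 1 - pH_set H pH (version_space H psi \<inter> {h. h e = ob})"
      using cond_util_version_util[of H pH "psi(e \<mapsto> ob)"]
      by (simp add: version_space_map_upd[OF e] Un_commute)
    then show ?thesis
      using cond_util_version_util[OF pos] pH_set_version_space_split[OF pr, of psi e ob] by simp
  qed
  show ?thesis unfolding f_wc_def using gain by (simp cong: image_cong)
qed

lemma f_wc_version_util_le_pruned_mass:
  fixes H :: "('e::finite \<Rightarrow> 'o::finite) set"
  assumes pr: "prior_on H pH" and pos: "prob_cons H pH psi > 0" and e: "e \<notin> dom psi"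
  shows "f_wc H pH (version_util H pH) e psi \<le> pruned_mass H pH psi e ob"
proof (cases "ob \<in> outcomes H pH e psi")
  case True
  then show ?thesis by (simp add: f_wc_version_util[OF assms])
next
  case False
  obtain ob' where ob': "ob' \<in> outcomes H pH e psi"
    using outcomes_nonempty[OF pr pos] by blast
  have "pruned_mass H pH psi e ob' \<le> pH_set H pH (version_space H psi)"
    using pH_set_version_space_split[OF pr, of psi e ob'] pH_set_nonneg[OF pr] by simp
  also have "\<dots> = pruned_mass H pH psi e ob"
    using False mem_outcomes_iff[OF pr pos] pH_set_nonneg[OF pr]
      pH_set_version_space_split[OF pr, of psi e ob]
    by (simp add: not_less order_antisym)
  finally have "pruned_mass H pH psi e ob' \<le> pruned_mass H pH psi e ob" .
  moreover have "Min (pruned_mass H pH psi e ` outcomes H pH e psi) \<le> pruned_mass H pH psi e ob'"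
    using ob' by (intro Min_le) auto
  ultimately show ?thesis by (simp add: f_wc_version_util[OF assms])
qed

theorem proposition1:
  fixes H :: "('e::finite \<Rightarrow> 'o::finite) set" and pH :: "('e \<Rightarrow> 'o) \<Rightarrow> real"
  assumes "prior_on H pH"
  shows "wc_submodular H pH (version_util H pH)"
  unfolding wc_submodular_def
proof (intro allI impI)
  fix psi psi' :: "'e \<rightharpoonup> 'o" and e
  assume le: "psi \<subseteq>\<^sub>m psi'" and pos: "prob_cons H pH psi > 0" and pos': "prob_cons H pH psi' > 0"
    and e': "e \<notin> dom psi'"
  have e: "e \<notin> dom psi" using le e' by (force simp: map_le_def dom_def)
  have "Min (pruned_mass H pH psi e ` outcomes H pH e psi) \<in> pruned_mass H pH psi e ` outcomes H pH e psi"
    using outcomes_nonempty[OF assms pos] by (intro Min_in) auto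
  then obtain ob where ob: "f_wc H pH (version_util H pH) e psi = pruned_mass H pH psi e ob"
    by (auto simp: f_wc_version_util[OF assms pos e])
  have "f_wc H pH (version_util H pH) e psi' \<le> pruned_mass H pH psi' e ob"
    by (rule f_wc_version_util_le_pruned_mass[OF assms pos' e'])
  also have "\<dots> \<le> pruned_mass H pH psi e ob"
    by (rule pruned_mass_antimono[OF assms le])
  finally show "f_wc H pH (version_util H pH) e psi' \<le> f_wc H pH (version_util H pH) e psi"
    using ob by simp
qed

end
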